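(* There is a unique function $\phi\colon\mathrm{SL}_2(\mathbb{Z})\times\mathrm{SL}_2(\mathbb{Z})\to\frac{1}{12}\mathbb{Z}$ which is left $\mathrm{SL}_2(\mathbb{Z})$-invariant ($\phi(h\gamma_1,h\gamma_2)=\phi(\gamma_1,\gamma_2)$) and satisfies $$\phi(\gamma_1,\gamma_2)+\phi(\gamma_2,\gamma_3)-\phi(\gamma_1,\gamma_3)=\delta(\gamma_1\ell_0,\gamma_2\ell_0,\gamma_3\ell_0)$$ for all $\gamma_1,\gamma_2,\gamma_3\in\mathrm{SL}_2(\mathbb{Z})$.
   Context: $S^1=(\mathbb{R}^2\setminus\{0\})/\mathbb{R}_+$ is the circle of rays in $\mathbb{R}^2$ (row vectors) with the standard orientation. $\ell_0$ is the ray $\mathbb{R}_+(-1,0)$, and $\gamma\in\mathrm{SL}_2(\mathbb{Z})$ acts on rays by $\mathbb{R}_+\nu\mapsto\mathbb{R}_+\nu\gamma^{-1}$. For rays $\ell_1,\ell_2,\ell_3$, $\delta(\ell_1,\ell_2,\ell_3)=0$ if $\ell_2$ lies on the closed counterclockwise arc from $\ell_1$ to $\ell_3$ (endpoints included), and $\delta(\ell_1,\ell_2,\ell_3)=1$ otherwise. *)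

theory Defs
  imports "HOL-Analysis.Analysis"
begin

definition SL2 :: "(int^2^2) set" where
  "SL2 = {g. det g = 1}"

definition sl2_inv :: "int^2^2 \<Rightarrow> int^2^2" where
  "sl2_inv g = (\<chi> i j. if i = 1 \<and> j = 1 then g$2$2
                        else if i = 1 \<and> j = 2 then - g$1$2
                        else if i = 2 \<and> j = 1 then - g$2$1
                        else g$1$1)"

text \<open>Rays are represented by nonzero row vectors in R^2 (rays = positive multiples).
  The action: R_+ nu |-> R_+ (nu g^{-1}).\<close>
definition ray_act :: "int^2^2 \<Rightarrow> real^2 \<Rightarrow> real^2" where
  "ray_act g \<nu> = \<nu> v* (map_matrix real_of_int (sl2_inv g))"

definition ell0 :: "real^2" where
  "ell0 = vector [-1, 0]"

definition to_cpx :: "real^2 \<Rightarrow> complex" where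
  "to_cpx v = Complex (v$1) (v$2)"

definition ccw_angle :: "real^2 \<Rightarrow> real^2 \<Rightarrow> real" where
  "ccw_angle u v = (let a = Arg (to_cpx v / to_cpx u) in if 0 \<le> a then a else a + 2 * pi)"

definition delta :: "real^2 \<Rightarrow> real^2 \<Rightarrow> real^2 \<Rightarrow> real" where
  "delta l1 l2 l3 = (if ccw_angle l1 l2 \<le> ccw_angle l1 l3 then 0 else 1)"

definition phi_prop :: "(int^2^2 \<Rightarrow> int^2^2 \<Rightarrow> real) \<Rightarrow> bool" where
  "phi_prop \<phi> \<longleftrightarrow>
     (\<forall>g1\<in>SL2. \<forall>g2\<in>SL2. \<exists>k::int. \<phi> g1 g2 = of_int k / 12) \<and>
     (\<forall>h\<in>SL2. \<forall>g1\<in>SL2. \<forall>g2\<in>SL2. \<phi> (h ** g1) (h ** g2) = \<phi> g1 g2) \<and>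
     (\<forall>g1\<in>SL2. \<forall>g2\<in>SL2. \<forall>g3\<in>SL2.
        \<phi> g1 g2 + \<phi> g2 g3 - \<phi> g1 g3
          = delta (ray_act g1 ell0) (ray_act g2 ell0) (ray_act g3 ell0))"

end

theory Submission
  imports Defs
begin

text \<open>
  Left invariance forces \<open>\<phi>(\<gamma>\<^sub>1, \<gamma>\<^sub>2) = \<Phi>(\<gamma>\<^sub>1\<^sup>-\<^sup>1 \<gamma>\<^sub>2)\<close>, and the
  required identity becomes \<open>\<Phi>(a) + \<Phi>(b) - \<Phi>(ab) = \<delta>(l\<^sub>0, a l\<^sub>0, ab l\<^sub>0)\<close>. Since \<open>\<delta>\<close> is
  invariant under orientation preserving linear maps and satisfies a cocycle identity for four
  rays, the right-hand side is a 2-cocycle on \<open>SL\<^sub>2(\<int>)\<close>, so it suffices to verify the identity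
  for \<open>b\<close> one of the generators \<open>S\<close>, \<open>U\<close>. A solution \<open>12\<Phi>\<close> is computed along the Euclidean
  algorithm on the first row, and for it the two cases are transformation laws of the recursion.
  Two solutions differ by a homomorphism \<open>SL\<^sub>2(\<int>) \<rightarrow> \<real>\<close>, which is trivial because
  \<open>S\<^sup>4 = (SU)\<^sup>3 = 1\<close>.
\<close>

definition mat2 :: "'a::zero \<Rightarrow> 'a \<Rightarrow> 'a \<Rightarrow> 'a \<Rightarrow> 'a^2^2" where
  "mat2 a b c d = (\<chi> i j. if i = 1 then (if j = 1 then a else b) else (if j = 1 then c else d))"

lemma mat2_nth [simp]:
  "mat2 a b c d $ 1 $ 1 = a" "mat2 a b c d $ 1 $ 2 = b"
  "mat2 a b c d $ 2 $ 1 = c" "mat2 a b c d $ 2 $ 2 = d"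
  by (simp_all add: mat2_def)

lemma mat2_cases: obtains a b c d where "M = mat2 a b c d"
proof
  show "M = mat2 (M$1$1) (M$1$2) (M$2$1) (M$2$2)" by (simp add: vec_eq_iff forall_2)
qed

lemma mat2_eq_iff: "mat2 a b c d = mat2 a' b' c' d' \<longleftrightarrow> a = a' \<and> b = b' \<and> c = c' \<and> d = d'"
  by (auto simp: vec_eq_iff forall_2)

lemma mat2_one: "mat2 1 0 0 1 = mat 1"
  by (simp add: vec_eq_iff forall_2 mat_def)

lemma mat2_mult:
  "mat2 a b c d ** mat2 x y z w = mat2 (a*x + b*z) (a*y + b*w) (c*x + d*z) (c*y + (d::'a::semiring_1)*w)"
  by (simp add: vec_eq_iff forall_2 matrix_matrix_mult_def sum_2)

lemma det_mat2: "det (mat2 a b c d) = a * d - b * (c::'a::comm_ring_1)"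
  by (simp add: det_2)

lemma sl2_inv_mat2: "sl2_inv (mat2 a b c d) = mat2 d (-b) (-c) a"
  by (simp add: sl2_inv_def vec_eq_iff forall_2)

lemma det_sl2_inv: "det (sl2_inv g) = det g"
  by (cases g rule: mat2_cases) (simp add: sl2_inv_mat2 det_mat2 algebra_simps)

lemma sl2_inv_mult: "sl2_inv (g ** h) = sl2_inv h ** sl2_inv g"
  by (cases g rule: mat2_cases, cases h rule: mat2_cases)
     (simp add: sl2_inv_mat2 mat2_mult mat2_eq_iff algebra_simps)

lemma sl2_inv_left:
  assumes "det g = 1" shows "sl2_inv g ** g = mat 1"
proof -
  obtain a b c d where g: "g = mat2 a b c d" by (rule mat2_cases)
  with assms show ?thesis
    by (simp add: sl2_inv_mat2 mat2_mult det_mat2 mat2_one[symmetric] mat2_eq_iff algebra_simps)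
qed

lemma sl2_inv_right:
  assumes "det g = 1" shows "g ** sl2_inv g = mat 1"
proof -
  obtain a b c d where g: "g = mat2 a b c d" by (rule mat2_cases)
  with assms show ?thesis
    by (simp add: sl2_inv_mat2 mat2_mult det_mat2 mat2_one[symmetric] mat2_eq_iff algebra_simps)
qed

lemma mult_sl2_inv_cancel_left: "det g = 1 \<Longrightarrow> g ** (sl2_inv g ** x) = x"
  by (simp add: matrix_mul_assoc sl2_inv_right)

lemma sl2_inv_mult_cancel_left: "det g = 1 \<Longrightarrow> sl2_inv g ** (g ** x) = x"
  by (simp add: matrix_mul_assoc sl2_inv_left)

lemma SL2_sl2_inv: "g \<in> SL2 \<Longrightarrow> sl2_inv g \<in> SL2"
  by (simp add: SL2_def det_sl2_inv)

definition Smat :: "int^2^2" where "Smat = mat2 0 (-1) 1 0"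
definition Umat :: "int^2^2" where "Umat = mat2 1 0 1 1"

lemma det_Smat [simp]: "det Smat = 1" and det_Umat [simp]: "det Umat = 1"
  by (simp_all add: Smat_def Umat_def det_mat2)

lemma int_mult_eq_1_cases: "(a::int) * d = 1 \<Longrightarrow> (a = 1 \<and> d = 1) \<or> (a = -1 \<and> d = -1)"
  using zmult_eq_1_iff by auto

lemma euclid_step_det:
  assumes "a * d - b * c = (1::int)"
  shows "(-b) * (c - (a div b) * d) - (a mod b) * (-d) = 1"
proof -
  have "a mod b = a - b * (a div b)" by (simp add: minus_div_mult_eq_mod[symmetric] mult.commute)
  then have "(-b) * (c - (a div b) * d) - (a mod b) * (-d) = a * d - b * c"
    by (simp only:) (simp add: algebra_simps)
  with assms show ?thesis by simp
qed

lemma euclid_step_factor: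
  "mat2 a b c d = mat2 (-b) (a mod b) (-d) (c - (a div b) * d) ** Smat ** mat2 1 0 (a div b) 1"
proof -
  have "a mod b + a div b * b = a" by simp
  then show ?thesis by (simp add: Smat_def mat2_mult mat2_eq_iff algebra_simps)
qed

lemma closed_under_Umat_power:
  assumes Smat: "\<And>g. det g = 1 \<Longrightarrow> P g \<Longrightarrow> P (g ** Smat)"
    and Umat: "\<And>g. det g = 1 \<Longrightarrow> P g \<Longrightarrow> P (g ** Umat)"
    and "det g = 1" "P g"
  shows "P (g ** mat2 1 0 n 1)"
proof -
  have Umat_inv: "P (g ** mat2 1 0 (-1) 1)" if "det g = 1" "P g" for g
  proof -
    have "P (g ** Smat ** Umat ** Smat ** Umat ** Smat)"
      using that by (intro Smat Umat) (simp_all add: det_mul)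
    then show ?thesis by (simp add: Smat_def Umat_def matrix_mul_assoc[symmetric] mat2_mult)
  qed
  show ?thesis
  proof (induction n rule: int_induct[where k = 0])
    case base
    then show ?case using assms(3,4) by (simp add: mat2_one)
  next
    case (step1 i)
    have "P (g ** mat2 1 0 i 1 ** Umat)"
      using step1 assms(3) by (intro Umat) (simp_all add: det_mul det_mat2)
    then show ?case by (simp add: Umat_def matrix_mul_assoc[symmetric] mat2_mult)
  next
    case (step2 i)
    have "P (g ** mat2 1 0 i 1 ** mat2 1 0 (-1) 1)"
      using step2 assms(3) by (intro Umat_inv) (simp_all add: det_mul det_mat2)
    then show ?case by (simp add: matrix_mul_assoc[symmetric] mat2_mult)
  qed
qed

lemma SL2_induct [consumes 1, case_names one Smat Umat]:
  assumes "det g = 1"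
    and one: "P (mat 1)"
    and Smat: "\<And>g. det g = 1 \<Longrightarrow> P g \<Longrightarrow> P (g ** Smat)"
    and Umat: "\<And>g. det g = 1 \<Longrightarrow> P g \<Longrightarrow> P (g ** Umat)"
  shows "P g"
  using assms(1)
proof (induction "nat \<bar>g$1$2\<bar>" arbitrary: g rule: less_induct)
  case less
  note Umat_power = closed_under_Umat_power[of P, OF Smat Umat]
  obtain a b c d where g: "g = mat2 a b c d" by (rule mat2_cases)
  have det: "a * d - b * c = 1" using less.prems g by (simp add: det_mat2)
  show ?case
  proof (cases "b = 0")
    case True
    then consider "a = 1" "d = 1" | "a = -1" "d = -1" using int_mult_eq_1_cases det by auto
    then show ?thesis
    proof cases
      case 1
      have "P (mat 1 ** mat2 1 0 c 1)" using one by (intro Umat_power) simp_all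
      with 1 True g show ?thesis by simp
    next
      case 2
      have "P (mat 1 ** Smat ** Smat ** mat2 1 0 (-c) 1)"
        using one by (intro Umat_power Smat) (simp_all add: det_mul)
      with 2 True g show ?thesis by (simp add: Smat_def mat2_mult)
    qed
  next
    case False
    define g' where "g' = mat2 (-b) (a mod b) (-d) (c - (a div b) * d)"
    have det': "det g' = 1" using euclid_step_det[OF det] by (simp add: g'_def det_mat2)
    moreover have "nat \<bar>g'$1$2\<bar> < nat \<bar>g$1$2\<bar>"
      using False g abs_mod_less[OF False, of a] by (simp add: g'_def)
    ultimately have "P g'" using less.hyps by blast
    then have "P (g' ** Smat ** mat2 1 0 (a div b) 1)"
      using det' by (intro Umat_power Smat) (simp_all add: det_mul)
    then show ?thesis by (simp add: g g'_def flip: euclid_step_factor)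
  qed
qed

text \<open>
  For \<open>b \<noteq> 0\<close> the recursion follows the factorization in \<open>euclid_step_factor\<close>: passing from the
  matrix of the recursive call to \<open>mat2 a b c d\<close> multiplies on the right by \<open>S\<close> and then by
  \<open>U\<^sup>q\<close>, \<open>q = a div b\<close>, which adds \<open>3\<close> and \<open>q\<close>. The base values are those on \<open>U\<^sup>c\<close> and on
  \<open>-U\<^sup>-\<^sup>c = S\<^sup>2 U\<^sup>-\<^sup>c\<close>.
\<close>

function phi12 :: "int \<Rightarrow> int \<Rightarrow> int \<Rightarrow> int \<Rightarrow> int" where
  "phi12 a b c d =
     (if b = 0 then (if a = 1 then c else 6 - c)
      else phi12 (-b) (a mod b) (-d) (c - (a div b) * d) + 3 + a div b)"
  by auto
termination
  by (relation "Wellfounded.measure (\<lambda>(a, b, c, d). nat \<bar>b\<bar>)") (auto simp: abs_mod_less)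

declare phi12.simps [simp del]

lemma phi12_diag [simp]: "phi12 a 0 c d = (if a = 1 then c else 6 - c)"
  by (simp add: phi12.simps)

lemma phi12_step:
  "b \<noteq> 0 \<Longrightarrow> phi12 a b c d = phi12 (-b) (a mod b) (-d) (c - (a div b) * d) + 3 + a div b"
  by (subst phi12.simps) simp

lemma phi12_Umat:
  assumes "a * d - b * c = 1"
  shows "phi12 (a + b) b (c + d) d = phi12 a b c d + 1"
proof (cases "b = 0")
  case True
  then show ?thesis using int_mult_eq_1_cases[of a d] assms by auto
next
  case False
  then have "(a + b) div b = a div b + 1" by simp
  with False show ?thesis by (simp add: phi12_step[of b] algebra_simps)
qed

definition neg_jump :: "int \<Rightarrow> int \<Rightarrow> int" where
  "neg_jump a b = (if b > 0 \<or> (b = 0 \<and> a = -1) then 1 else 0)"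

lemma phi12_neg:
  "a * d - b * c = 1 \<Longrightarrow> phi12 (-a) (-b) (-c) (-d) = phi12 a b c d + 6 - 12 * neg_jump a b"
proof (induction a b c d rule: phi12.induct)
  case (1 a b c d)
  show ?case
  proof (cases "b = 0")
    case True
    then show ?thesis using int_mult_eq_1_cases[of a d] 1(2) by (auto simp: neg_jump_def)
  next
    case False
    define q r where "q = a div b" and "r = a mod b"
    have IH: "phi12 b (-r) d (-(c - q * d)) = phi12 (-b) r (-d) (c - q * d) + 6 - 12 * neg_jump (-b) r"
      using "1.IH"[OF False euclid_step_det[OF "1.prems"]] by (simp add: q_def r_def)
    have lhs: "phi12 (-a) (-b) (-c) (-d) = phi12 b (-r) d (-(c - q * d)) + 3 + q"
      using False phi12_step[of "-b" "-a" "-c" "-d"] by (simp add: q_def r_def)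
    have rhs: "phi12 a b c d = phi12 (-b) r (-d) (c - q * d) + 3 + q"
      using False phi12_step[of b a c d] by (simp add: q_def r_def)
    have "neg_jump (-b) r = neg_jump a b"
    proof (cases "b > 0")
      case True
      have "r = 0 \<Longrightarrow> b = 1"
      proof -
        assume "r = 0"
        then have "b dvd a" by (simp add: r_def dvd_eq_mod_eq_0)
        then have "b dvd a * d - b * c" by simp
        with "1.prems" True show "b = 1" by simp
      qed
      moreover have "r \<ge> 0" using True by (simp add: r_def)
      ultimately show ?thesis using True by (auto simp: neg_jump_def)
    next
      case False
      with \<open>b \<noteq> 0\<close> have "b < 0" by simp
      then have "r \<le> 0" by (simp add: r_def)
      with \<open>b < 0\<close> show ?thesis by (auto simp: neg_jump_def)
    qed
    with IH lhs rhs show ?thesis by simp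
  qed
qed

definition S_jump :: "int \<Rightarrow> int \<Rightarrow> int" where
  "S_jump a b = (if a \<ge> 0 \<and> b > 0 then 1 else 0)"

definition phi12_S_law :: "int \<Rightarrow> int \<Rightarrow> int \<Rightarrow> int \<Rightarrow> bool" where
  "phi12_S_law a b c d \<longleftrightarrow> phi12 b (-a) d (-c) = phi12 a b c d + 3 - 12 * S_jump a b"

lemma phi12_S_law_rotate:
  assumes "a * d - b * c = 1" "phi12_S_law a b c d"
  shows "phi12_S_law b (-a) d (-c)"
proof -
  have "b = 0 \<Longrightarrow> a = 1 \<or> a = -1" using assms(1) int_mult_eq_1_cases[of a d] by auto
  then have "neg_jump a b = S_jump a b + S_jump b (-a)"
    by (auto simp: neg_jump_def S_jump_def)
  with assms phi12_neg[OF assms(1)] show ?thesis unfolding phi12_S_law_def by simp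
qed

lemma phi12_S_law_rotate_iff:
  assumes "a * d - b * c = 1"
  shows "phi12_S_law b (-a) d (-c) \<longleftrightarrow> phi12_S_law a b c d"
proof
  have det1: "b * (-c) - (-a) * d = 1" and det2: "(-a) * (-d) - (-b) * (-c) = 1"
    and det3: "(-b) * c - a * (-d) = 1"
    using assms by (simp_all add: algebra_simps)
  assume "phi12_S_law b (-a) d (-c)"
  then have "phi12_S_law (-a) (-b) (-c) (-d)" using phi12_S_law_rotate[OF det1] by simp
  then have "phi12_S_law (-b) a (-d) c" using phi12_S_law_rotate[OF det2] by simp
  then show "phi12_S_law a b c d" using phi12_S_law_rotate[OF det3] by simp
qed (rule phi12_S_law_rotate[OF assms])

lemma phi12_S_no_quotient:
  assumes "a \<noteq> 0" "b mod (-a) = b"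
  shows "phi12 b (-a) d (-c) = phi12 a b c d + 3"
proof -
  have "b div (-a) = 0"
    using assms div_mult_mod_eq[of b "-a"] by simp
  with assms phi12_step[of "-a" b d "-c"] show ?thesis by simp
qed

lemma phi12_S_law_quadrant:
  "a \<ge> 0 \<Longrightarrow> b > 0 \<Longrightarrow> a * d - b * c = 1 \<Longrightarrow> phi12_S_law a b c d"
proof (induction "nat (a + b)" arbitrary: a b c d rule: less_induct)
  case less
  show ?case
  proof (cases "a < b")
    case True
    have "phi12 a b c d = phi12 (-b) a (-d) c + 3"
      using phi12_S_no_quotient[of "-b" a c "-d"] True less.prems by simp
    then have "phi12_S_law (-b) a (-d) c" using less.prems by (simp add: phi12_S_law_def S_jump_def)
    moreover have "(-b) * c - a * (-d) = 1" using less.prems by (simp add: algebra_simps)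
    ultimately show ?thesis using phi12_S_law_rotate_iff by fastforce
  next
    case False
    have det': "(a - b) * d - b * (c - d) = 1" using less.prems by (simp add: algebra_simps)
    \<comment> \<open>With \<open>g' = mat2 (a - b) b (c - d) d\<close> and \<open>h = mat2 a (b - a) c (d - c)\<close> we have
      \<open>g = g' U\<close>, \<open>g' S = h U\<close> and \<open>g S U = h S\<close>; the last step has quotient \<open>0\<close>.\<close>
    have "phi12_S_law (a - b) b (c - d) d"
      using less.hyps[OF _ _ _ det'] False less.prems by simp
    then have g'S: "phi12 b (b - a) d (d - c) = phi12 (a - b) b (c - d) d - 9"
      using False less.prems by (simp add: phi12_S_law_def S_jump_def)
    have hU: "phi12 b (b - a) d (d - c) = phi12 a (b - a) c (d - c) + 1"
      using phi12_Umat[of a "d - c" "b - a" c] less.prems by (simp add: algebra_simps)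
    have "(b - a) mod (-a) = b - a"
      using False less.prems by (simp add: mod_pos_neg_trivial)
    then have hS: "phi12 (b - a) (-a) (d - c) (-c) = phi12 a (b - a) c (d - c) + 3"
      using phi12_S_no_quotient[where a = a and b = "b - a" and c = c and d = "d - c"] False less.prems
      by simp
    have gSU: "phi12 (b - a) (-a) (d - c) (-c) = phi12 b (-a) d (-c) + 1"
      using phi12_Umat[of b "-c" "-a" d] less.prems by simp
    have g'U: "phi12 a b c d = phi12 (a - b) b (c - d) d + 1"
      using phi12_Umat[OF det'] by simp
    from g'S hU hS gSU g'U less.prems show ?thesis by (simp add: phi12_S_law_def S_jump_def)
  qed
qed

lemma phi12_S:
  assumes "a * d - b * c = 1"
  shows "phi12 b (-a) d (-c) = phi12 a b c d + 3 - 12 * S_jump a b"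
proof -
  have "a \<noteq> 0 \<or> b \<noteq> 0" using assms by auto
  then consider "a \<ge> 0" "b > 0" | "b \<ge> 0" "a < 0" | "a \<le> 0" "b < 0" | "b \<le> 0" "a > 0"
    by linarith
  moreover have det1: "b * (-c) - (-a) * d = 1" and det2: "(-a) * (-d) - (-b) * (-c) = 1"
    and det3: "(-b) * c - a * (-d) = 1"
    using assms by (simp_all add: algebra_simps)
  ultimately have "phi12_S_law a b c d"
  proof cases
    case 1
    then show ?thesis using phi12_S_law_quadrant assms by blast
  next
    case 2
    then have "phi12_S_law b (-a) d (-c)" using phi12_S_law_quadrant det1 by simp
    then show ?thesis using phi12_S_law_rotate_iff[OF assms] by blast
  next
    case 3
    then have "phi12_S_law (-a) (-b) (-c) (-d)" using phi12_S_law_quadrant det2 by simp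
    then show ?thesis
      using phi12_S_law_rotate_iff[OF det1] phi12_S_law_rotate_iff[OF assms] by simp
  next
    case 4
    then have "phi12_S_law (-b) a (-d) c" using phi12_S_law_quadrant det3 by simp
    then show ?thesis using phi12_S_law_rotate_iff[OF det3] by simp
  qed
  then show ?thesis by (simp add: phi12_S_law_def)
qed

lemma Arg2pi_conv_Arg: "Arg2pi z = (if 0 \<le> Arg z then Arg z else Arg z + 2 * pi)"
proof (cases "z = 0")
  case True
  then show ?thesis by (simp add: Arg_zero)
next
  case False
  show ?thesis
  proof (rule Arg2pi_unique[of "norm z"])
    have "exp (\<i> * complex_of_real (Arg z + 2 * pi)) = exp (\<i> * complex_of_real (Arg z))"
      by (simp add: algebra_simps exp_add)
    then show "complex_of_real (norm z) *
        exp (\<i> * complex_of_real (if 0 \<le> Arg z then Arg z else Arg z + 2 * pi)) = z"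
      using Arg_eq[OF False] by auto
    show "0 < norm z" using False by simp
    show "0 \<le> (if 0 \<le> Arg z then Arg z else Arg z + 2 * pi)"
      using mpi_less_Arg[of z] by auto
    show "(if 0 \<le> Arg z then Arg z else Arg z + 2 * pi) < 2 * pi"
      using Arg_le_pi[of z] pi_gt_zero by (simp del: pi_gt_zero)
  qed
qed

lemma ccw_angle_Arg2pi: "ccw_angle u v = Arg2pi (to_cpx v / to_cpx u)"
  by (simp add: ccw_angle_def Arg2pi_conv_Arg Let_def)

text \<open>
  Ordering angles by sector and, within a sector, by the sign of \<open>Im (z\<^sub>2 / z\<^sub>1)\<close> replaces
  \<open>Arg2pi\<close> by data that orientation preserving linear maps visibly respect.
\<close>

definition arg_sector :: "complex \<Rightarrow> nat" where
  "arg_sector z = (if Im z = 0 \<and> Re z > 0 then 0 else if Im z > 0 then 1 else if Im z = 0 then 2 else 3)"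

lemma Arg2pi_arg_sector:
  assumes "z \<noteq> 0"
  shows "arg_sector z = 0 \<longleftrightarrow> Arg2pi z = 0"
    and "arg_sector z = 1 \<longleftrightarrow> 0 < Arg2pi z \<and> Arg2pi z < pi"
    and "arg_sector z = 2 \<longleftrightarrow> Arg2pi z = pi"
    and "arg_sector z = 3 \<longleftrightarrow> pi < Arg2pi z"
proof -
  have "Im z = 0 \<Longrightarrow> Re z \<noteq> 0" using assms by (auto simp: complex_eq_iff)
  then show "arg_sector z = 0 \<longleftrightarrow> Arg2pi z = 0" "arg_sector z = 2 \<longleftrightarrow> Arg2pi z = pi"
    using Arg2pi_eq_0[of z] Arg2pi_eq_pi[of z]
    by (auto simp: arg_sector_def complex_is_Real_iff)
  show "arg_sector z = 1 \<longleftrightarrow> 0 < Arg2pi z \<and> Arg2pi z < pi"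
    using Arg2pi_lt_pi[of z] by (auto simp: arg_sector_def)
  show "arg_sector z = 3 \<longleftrightarrow> pi < Arg2pi z"
    using Arg2pi_le_pi[of z] by (auto simp: arg_sector_def)
qed

lemma arg_sector_cases:
  obtains "arg_sector z = 0" | "arg_sector z = 1" | "arg_sector z = 2" | "arg_sector z = 3"
  unfolding arg_sector_def by (metis One_nat_def)

lemma Arg2pi_less_if_arg_sector_less:
  assumes "z1 \<noteq> 0" "z2 \<noteq> 0" "arg_sector z1 < arg_sector z2"
  shows "Arg2pi z1 < Arg2pi z2"
  using Arg2pi_arg_sector[OF assms(1)] Arg2pi_arg_sector[OF assms(2)] assms(3) pi_gt_zero
  by (cases z1 rule: arg_sector_cases; cases z2 rule: arg_sector_cases) (auto simp del: pi_gt_zero)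

lemma Arg2pi_diff_less_pi_if_arg_sector_eq:
  assumes "z1 \<noteq> 0" "z2 \<noteq> 0" "arg_sector z1 = arg_sector z2"
  shows "\<bar>Arg2pi z2 - Arg2pi z1\<bar> < pi"
  using Arg2pi_arg_sector[OF assms(1)] Arg2pi_arg_sector[OF assms(2)] assms(3) pi_gt_zero
    Arg2pi_lt_2pi[of z1] Arg2pi_lt_2pi[of z2]
  by (cases z1 rule: arg_sector_cases) (auto simp del: pi_gt_zero)

lemma Arg2pi_le_iff_arg_sector:
  assumes "z1 \<noteq> 0" "z2 \<noteq> 0"
  shows "Arg2pi z1 \<le> Arg2pi z2 \<longleftrightarrow>
    arg_sector z1 < arg_sector z2 \<or> (arg_sector z1 = arg_sector z2 \<and> 0 \<le> Im (z2 / z1))"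
proof (cases "arg_sector z1 = arg_sector z2")
  case True
  have "\<bar>Arg2pi z2 - Arg2pi z1\<bar> < pi"
    using Arg2pi_diff_less_pi_if_arg_sector_eq[OF assms True] .
  with Arg2pi_diff[OF assms(2,1)] Arg2pi_le_pi[of "z2 / z1"] True show ?thesis
    by (auto split: if_splits)
next
  case False
  with Arg2pi_less_if_arg_sector_less[OF assms] Arg2pi_less_if_arg_sector_less[OF assms(2,1)]
  show ?thesis by (auto simp: nat_neq_iff)
qed

definition cross2 :: "real^2 \<Rightarrow> real^2 \<Rightarrow> real" where
  "cross2 u v = u$1 * v$2 - u$2 * v$1"

lemma to_cpx_eq_0_iff [simp]: "to_cpx v = 0 \<longleftrightarrow> v = 0"
  by (auto simp: to_cpx_def complex_eq_iff vec_eq_iff forall_2)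

lemma to_cpx_inj: "to_cpx v = to_cpx w \<longleftrightarrow> v = w"
  by (auto simp: to_cpx_def complex_eq_iff vec_eq_iff forall_2)

lemma to_cpx_scaleR: "to_cpx (l *\<^sub>R v) = of_real l * to_cpx v"
  by (simp add: to_cpx_def complex_eq_iff)

lemma sgn_Im_to_cpx_div:
  assumes "v \<noteq> 0"
  shows "sgn (Im (to_cpx w / to_cpx v)) = sgn (cross2 v w)"
proof -
  have "0 < (v$1)\<^sup>2 + (v$2)\<^sup>2"
    using assms by (auto simp: vec_eq_iff forall_2 sum_power2_gt_zero_iff)
  moreover have "Im (to_cpx w / to_cpx v) = cross2 v w / ((v$1)\<^sup>2 + (v$2)\<^sup>2)"
    by (simp add: to_cpx_def Im_divide cross2_def algebra_simps)
  ultimately show ?thesis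
    by (auto simp: sgn_real_def zero_less_divide_iff divide_less_0_iff)
qed

lemma ray_act_nth:
  "ray_act g v $ 1 = v$1 * of_int (g$2$2) - v$2 * of_int (g$2$1)"
  "ray_act g v $ 2 = v$2 * of_int (g$1$1) - v$1 * of_int (g$1$2)"
  by (simp_all add: ray_act_def vector_matrix_mult_def sum_2 sl2_inv_def algebra_simps)

lemma ray_act_mult: "ray_act (g ** h) v = ray_act g (ray_act h v)"
  by (simp add: vec_eq_iff forall_2 ray_act_nth matrix_matrix_mult_def sum_2 algebra_simps)

lemma ray_act_scaleR: "ray_act g (l *\<^sub>R v) = l *\<^sub>R ray_act g v"
  by (simp add: vec_eq_iff forall_2 ray_act_nth algebra_simps)

lemma det_of_int_entries:
  fixes g :: "int^2^2"
  shows "det g = 1 \<Longrightarrow>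
    real_of_int (g$1$1) * real_of_int (g$2$2) - real_of_int (g$1$2) * real_of_int (g$2$1) = 1"
  unfolding det_2 by (metis of_int_1 of_int_diff of_int_mult)

lemma cross2_ray_act:
  assumes "det g = 1" shows "cross2 (ray_act g u) (ray_act g v) = cross2 u v"
proof -
  have "cross2 (ray_act g u) (ray_act g v) = cross2 u v *
      (real_of_int (g$1$1) * real_of_int (g$2$2) - real_of_int (g$1$2) * real_of_int (g$2$1))"
    by (simp add: cross2_def ray_act_nth algebra_simps)
  then show ?thesis using det_of_int_entries[OF assms] by simp
qed

lemma ray_act_one: "ray_act (mat 1) v = v"
  by (simp add: vec_eq_iff forall_2 ray_act_nth mat_def)

lemma ray_act_nonzero:
  assumes "det g = 1" "v \<noteq> 0" shows "ray_act g v \<noteq> 0"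
proof
  assume "ray_act g v = 0"
  then have "ray_act (sl2_inv g) (ray_act g v) = 0" by (simp add: ray_act_def)
  with assms show False by (simp add: ray_act_mult[symmetric] sl2_inv_left ray_act_one)
qed

lemma sgn_Im_div_ray_act:
  assumes "det g = 1" "v \<noteq> 0"
  shows "sgn (Im (to_cpx (ray_act g w) / to_cpx (ray_act g v))) = sgn (Im (to_cpx w / to_cpx v))"
  using assms by (simp add: sgn_Im_to_cpx_div ray_act_nonzero cross2_ray_act)

lemma arg_sector_ray_act:
  assumes "det g = 1" "v \<noteq> 0"
  shows "arg_sector (to_cpx (ray_act g w) / to_cpx (ray_act g v)) = arg_sector (to_cpx w / to_cpx v)"
proof (cases "Im (to_cpx w / to_cpx v) = 0")
  case False
  with sgn_Im_div_ray_act[OF assms, of w] show ?thesis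
    by (auto simp: arg_sector_def sgn_real_def split: if_splits)
next
  case True
  define l where "l = Re (to_cpx w / to_cpx v)"
  have "to_cpx w / to_cpx v = of_real l" using True by (simp add: l_def complex_eq_iff)
  then have "to_cpx w = to_cpx (l *\<^sub>R v)" using assms(2) by (simp add: to_cpx_scaleR field_simps)
  then have "w = l *\<^sub>R v" by (simp add: to_cpx_inj)
  with assms show ?thesis by (simp add: ray_act_scaleR to_cpx_scaleR ray_act_nonzero)
qed

lemma delta_eq_arg_sector:
  assumes "u \<noteq> 0" "v \<noteq> 0" "w \<noteq> 0"
  shows "delta u v w =
    (if arg_sector (to_cpx v / to_cpx u) < arg_sector (to_cpx w / to_cpx u) \<or>
        arg_sector (to_cpx v / to_cpx u) = arg_sector (to_cpx w / to_cpx u) \<and>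
        0 \<le> Im (to_cpx w / to_cpx v)
     then 0 else 1)"
proof -
  have "(to_cpx w / to_cpx u) / (to_cpx v / to_cpx u) = to_cpx w / to_cpx v"
    using assms by simp
  with assms show ?thesis
    by (simp add: delta_def ccw_angle_Arg2pi Arg2pi_le_iff_arg_sector)
qed

lemma delta_ray_act:
  assumes "det g = 1" "u \<noteq> 0" "v \<noteq> 0" "w \<noteq> 0"
  shows "delta (ray_act g u) (ray_act g v) (ray_act g w) = delta u v w"
proof -
  have "0 \<le> Im (to_cpx (ray_act g w) / to_cpx (ray_act g v)) \<longleftrightarrow> 0 \<le> Im (to_cpx w / to_cpx v)"
    using sgn_Im_div_ray_act[OF assms(1,3), of w] by (auto simp: sgn_real_def split: if_splits)
  with assms show ?thesis
    by (simp add: delta_eq_arg_sector ray_act_nonzero arg_sector_ray_act)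
qed

lemma delta_self: "delta u v v = 0"
  by (simp add: delta_def)

lemma delta_cocycle:
  assumes "p \<noteq> 0" "q \<noteq> 0" "r \<noteq> 0" "s \<noteq> 0"
  shows "delta p q r + delta p r s - delta q r s = delta p q s"
proof -
  define zq zr zs where "zq = to_cpx q / to_cpx p" and "zr = to_cpx r / to_cpx p"
    and "zs = to_cpx s / to_cpx p"
  have nz: "zq \<noteq> 0" "zr \<noteq> 0" "zs \<noteq> 0" using assms by (auto simp: zq_def zr_def zs_def)
  have "to_cpx r / to_cpx q = zr / zq" "to_cpx s / to_cpx q = zs / zq"
    using assms by (auto simp: zq_def zr_def zs_def)
  then have "ccw_angle q r = Arg2pi zr - Arg2pi zq + (if Arg2pi zq \<le> Arg2pi zr then 0 else 2 * pi)"
    "ccw_angle q s = Arg2pi zs - Arg2pi zq + (if Arg2pi zq \<le> Arg2pi zs then 0 else 2 * pi)"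
    using Arg2pi_diff[OF nz(2,1)] Arg2pi_diff[OF nz(3,1)] by (auto simp: ccw_angle_Arg2pi)
  moreover have "ccw_angle p q = Arg2pi zq" "ccw_angle p r = Arg2pi zr" "ccw_angle p s = Arg2pi zs"
    by (simp_all add: ccw_angle_Arg2pi zq_def zr_def zs_def)
  ultimately show ?thesis
    using Arg2pi_ge_0[of zq] Arg2pi_lt_2pi[of zq] Arg2pi_ge_0[of zr] Arg2pi_lt_2pi[of zr]
      Arg2pi_ge_0[of zs] Arg2pi_lt_2pi[of zs]
    by (simp add: delta_def)
qed

definition Phi :: "int^2^2 \<Rightarrow> real" where
  "Phi g = of_int (phi12 (g$1$1) (g$1$2) (g$2$1) (g$2$2)) / 12"

definition delta_inhom :: "int^2^2 \<Rightarrow> int^2^2 \<Rightarrow> real" where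
  "delta_inhom a b = delta ell0 (ray_act a ell0) (ray_act (a ** b) ell0)"

lemma ell0_nonzero: "ell0 \<noteq> 0"
  by (simp add: ell0_def vec_eq_iff forall_2)

lemma delta_inhom_cocycle:
  assumes "det a = 1" "det b = 1" "det c = 1"
  shows "delta_inhom a b + delta_inhom (a ** b) c - delta_inhom b c = delta_inhom a (b ** c)"
proof -
  have nz: "ray_act g ell0 \<noteq> 0" if "det g = 1" for g
    using that ray_act_nonzero ell0_nonzero by blast
  have "delta (ray_act a ell0) (ray_act a (ray_act b ell0)) (ray_act a (ray_act (b ** c) ell0)) =
      delta_inhom b c"
    unfolding delta_inhom_def
    by (rule delta_ray_act[OF assms(1) ell0_nonzero nz nz]) (simp_all add: assms det_mul)
  then have "delta_inhom b c =
      delta (ray_act a ell0) (ray_act (a ** b) ell0) (ray_act (a ** b ** c) ell0)"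
    by (simp add: ray_act_mult)
  then show ?thesis
    using delta_cocycle[OF ell0_nonzero nz nz nz, of a "a ** b" "a ** b ** c"] assms
    by (simp add: delta_inhom_def matrix_mul_assoc det_mul)
qed

lemma ray_act_mat2_ell0: "ray_act (mat2 p q r t) ell0 = vector [- of_int t, of_int q]"
  by (simp add: vec_eq_iff forall_2 ray_act_nth ell0_def)

lemma to_cpx_vector: "to_cpx (vector [x, y]) = Complex x y"
  by (simp add: to_cpx_def)

lemma to_cpx_ell0: "to_cpx ell0 = -1"
  by (simp add: ell0_def to_cpx_vector complex_eq_iff)

lemma delta_inhom_Smat:
  assumes "p * t - q * r = 1"
  shows "delta_inhom (mat2 p q r t) Smat = of_int (S_jump p q)"
proof -
  define v w where "v = ray_act (mat2 p q r t) ell0" and "w = ray_act (mat2 q (-p) t (-r)) ell0"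
  have nz: "v \<noteq> 0" "w \<noteq> 0"
    using assms ray_act_nonzero ell0_nonzero by (auto simp: v_def w_def det_mat2)
  have "sgn (Im (to_cpx w / to_cpx v)) = 1"
    using assms nz(1)
    by (simp add: mult.commute sgn_Im_to_cpx_div v_def w_def ray_act_mat2_ell0 cross2_def
      flip: of_int_mult of_int_diff)
  then have "0 \<le> Im (to_cpx w / to_cpx v)" by (auto simp: sgn_real_def split: if_splits)
  moreover have "to_cpx v / to_cpx ell0 = Complex t (-q)" "to_cpx w / to_cpx ell0 = Complex (-r) p"
    by (simp_all add: v_def w_def ray_act_mat2_ell0 to_cpx_vector to_cpx_ell0 complex_eq_iff)
  moreover have "q = 0 \<Longrightarrow> (p = 1 \<and> t = 1) \<or> (p = -1 \<and> t = -1)"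
    using assms int_mult_eq_1_cases by auto
  moreover have "(q > 0 \<and> r < 0) \<or> (q < 0 \<and> r > 0)" if "p = 0"
  proof -
    from that assms have "q * r < 0" by simp
    then show ?thesis by (auto simp: mult_less_0_iff)
  qed
  moreover have "mat2 p q r t ** Smat = mat2 q (-p) t (-r)"
    by (simp add: Smat_def mat2_mult)
  ultimately show ?thesis
    using nz ell0_nonzero
    by (auto simp: delta_inhom_def delta_eq_arg_sector arg_sector_def S_jump_def
      simp flip: v_def w_def)
qed

lemma delta_inhom_Umat: "delta_inhom a Umat = 0"
proof -
  have "ray_act Umat ell0 = ell0"
    by (simp add: vec_eq_iff forall_2 ray_act_nth Umat_def ell0_def)
  then show ?thesis by (simp add: delta_inhom_def ray_act_mult delta_self)
qed

lemma Phi_mat2: "Phi (mat2 p q r t) = of_int (phi12 p q r t) / 12"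
  by (simp add: Phi_def)

lemma Phi_coboundary_Smat:
  assumes "det a = 1"
  shows "Phi a + Phi Smat - Phi (a ** Smat) = delta_inhom a Smat"
proof -
  obtain p q r t where a: "a = mat2 p q r t" by (rule mat2_cases)
  with assms have det: "p * t - q * r = 1" by (simp add: det_mat2)
  have "phi12 0 (-1) 1 0 = 3" by (simp add: phi12_step)
  with phi12_S[OF det] delta_inhom_Smat[OF det] show ?thesis
    by (simp add: a Smat_def mat2_mult Phi_mat2 field_simps)
qed

lemma Phi_coboundary_Umat:
  assumes "det a = 1"
  shows "Phi a + Phi Umat - Phi (a ** Umat) = delta_inhom a Umat"
proof -
  obtain p q r t where a: "a = mat2 p q r t" by (rule mat2_cases)
  with assms have det: "p * t - q * r = 1" by (simp add: det_mat2)
  with phi12_Umat[OF det] show ?thesis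
    unfolding delta_inhom_Umat by (simp add: a Umat_def mat2_mult Phi_mat2 field_simps)
qed

lemma Phi_coboundary_mult_right:
  assumes "det a = 1" "det b = 1" "det s = 1"
    and "Phi a + Phi b - Phi (a ** b) = delta_inhom a b"
    and s: "\<And>c. det c = 1 \<Longrightarrow> Phi c + Phi s - Phi (c ** s) = delta_inhom c s"
  shows "Phi a + Phi (b ** s) - Phi (a ** (b ** s)) = delta_inhom a (b ** s)"
proof -
  have "Phi a + Phi (b ** s) - Phi (a ** (b ** s)) =
      (Phi a + Phi b - Phi (a ** b)) + (Phi (a ** b) + Phi s - Phi (a ** b ** s))
      - (Phi b + Phi s - Phi (b ** s))"
    by (simp add: matrix_mul_assoc)
  also have "\<dots> = delta_inhom a b + delta_inhom (a ** b) s - delta_inhom b s"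
    using assms by (simp add: s det_mul)
  also have "\<dots> = delta_inhom a (b ** s)"
    using assms by (simp add: delta_inhom_cocycle)
  finally show ?thesis .
qed

lemma Phi_coboundary:
  assumes "det a = 1" "det b = 1"
  shows "Phi a + Phi b - Phi (a ** b) = delta_inhom a b"
  using assms(2,1)
proof (induction b arbitrary: a rule: SL2_induct)
  case one
  have "Phi (mat 1) = 0" by (simp add: Phi_def mat_def)
  then show ?case by (simp add: delta_inhom_def delta_self)
next
  case (Smat b)
  then show ?case by (intro Phi_coboundary_mult_right Phi_coboundary_Smat) simp_all
next
  case (Umat b)
  then show ?case by (intro Phi_coboundary_mult_right Phi_coboundary_Umat) simp_all
qed

definition phi_std :: "int^2^2 \<Rightarrow> int^2^2 \<Rightarrow> real" where
  "phi_std g1 g2 = Phi (sl2_inv g1 ** g2)"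

lemma phi_prop_phi_std: "phi_prop phi_std"
  unfolding phi_prop_def
proof (intro conjI ballI)
  fix g1 g2 :: "int^2^2"
  show "\<exists>k::int. phi_std g1 g2 = of_int k / 12"
    unfolding phi_std_def Phi_def by blast
next
  fix h g1 g2 :: "int^2^2"
  assume "h \<in> SL2"
  then have "sl2_inv (h ** g1) ** (h ** g2) = sl2_inv g1 ** g2"
    by (simp add: SL2_def sl2_inv_mult sl2_inv_mult_cancel_left flip: matrix_mul_assoc)
  then show "phi_std (h ** g1) (h ** g2) = phi_std g1 g2" by (simp add: phi_std_def)
next
  fix g1 g2 g3 :: "int^2^2"
  assume "g1 \<in> SL2" "g2 \<in> SL2" "g3 \<in> SL2"
  then have det: "det g1 = 1" "det g2 = 1" "det g3 = 1" by (simp_all add: SL2_def)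
  define a b where "a = sl2_inv g1 ** g2" and "b = sl2_inv g2 ** g3"
  have det_ab: "det a = 1" "det b = 1" using det by (simp_all add: a_def b_def det_mul det_sl2_inv)
  have g1_a: "g1 ** a = g2" and g1_ab: "g1 ** (a ** b) = g3" and ab: "a ** b = sl2_inv g1 ** g3"
    using det by (simp_all add: a_def b_def mult_sl2_inv_cancel_left flip: matrix_mul_assoc)
  have "delta (ray_act g1 ell0) (ray_act g2 ell0) (ray_act g3 ell0) = delta_inhom a b"
    unfolding delta_inhom_def g1_a[symmetric] g1_ab[symmetric] ray_act_mult
    using det det_ab by (intro delta_ray_act) (simp_all add: ell0_nonzero ray_act_nonzero det_mul)
  with Phi_coboundary[OF det_ab] ab show "phi_std g1 g2 + phi_std g2 g3 - phi_std g1 g3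
      = delta (ray_act g1 ell0) (ray_act g2 ell0) (ray_act g3 ell0)"
    by (simp add: phi_std_def a_def b_def)
qed

lemma SL2_hom_eq_0:
  fixes H :: "int^2^2 \<Rightarrow> 'a::real_vector"
  assumes hom: "\<And>x y. det x = 1 \<Longrightarrow> det y = 1 \<Longrightarrow> H (x ** y) = H x + H y"
    and "det g = 1"
  shows "H g = 0"
proof -
  have H_one: "H (mat 1) = 0"
    using hom[of "mat 1" "mat 1"] by simp
  have "Smat ** Smat ** (Smat ** Smat) = mat 1"
    by (simp add: Smat_def mat2_mult mat2_one[symmetric])
  moreover have "(4::real) *\<^sub>R H Smat = H Smat + H Smat + (H Smat + H Smat)"
    using scaleR_add_left[of 2 2 "H Smat"] by (simp add: scaleR_2)
  ultimately have "4 *\<^sub>R H Smat = 0"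
    using hom[of "Smat ** Smat" "Smat ** Smat"] hom[of Smat Smat] H_one by (simp add: det_mul)
  then have H_Smat: "H Smat = 0" by simp
  have "(Smat ** Umat) ** (Smat ** Umat) ** (Smat ** Umat) = mat 1"
    by (simp add: Smat_def Umat_def mat2_mult mat2_one[symmetric])
  moreover have
    "(3::real) *\<^sub>R H (Smat ** Umat) = H (Smat ** Umat) + H (Smat ** Umat) + H (Smat ** Umat)"
    using scaleR_add_left[of 2 1 "H (Smat ** Umat)"] by (simp add: scaleR_2)
  ultimately have "3 *\<^sub>R H (Smat ** Umat) = 0"
    using hom[of "Smat ** Umat ** (Smat ** Umat)" "Smat ** Umat"]
      hom[of "Smat ** Umat" "Smat ** Umat"] H_one
    by (simp add: det_mul)
  then have H_Umat: "H Umat = 0"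
    using hom[of Smat Umat] H_Smat by simp
  from assms(2) show ?thesis
  proof (induction rule: SL2_induct)
    case one
    show ?case by (rule H_one)
  next
    case (Smat g)
    then show ?case by (simp add: hom H_Smat)
  next
    case (Umat g)
    then show ?case by (simp add: hom H_Umat)
  qed
qed

lemma phi_prop_unique:
  assumes "phi_prop \<psi>" "g1 \<in> SL2" "g2 \<in> SL2"
  shows "\<psi> g1 g2 = phi_std g1 g2"
proof -
  define D where "D x y = \<psi> x y - phi_std x y" for x y
  have D_inv: "D (h ** x) (h ** y) = D x y" if "h \<in> SL2" "x \<in> SL2" "y \<in> SL2" for h x y
    using assms(1) phi_prop_phi_std that unfolding phi_prop_def D_def by simp
  have D_cocycle: "D x y + D y z = D x z" if "x \<in> SL2" "y \<in> SL2" "z \<in> SL2" for x y z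
  proof -
    have "\<psi> x y + \<psi> y z - \<psi> x z = phi_std x y + phi_std y z - phi_std x z"
      using assms(1) phi_prop_phi_std that unfolding phi_prop_def by simp
    then show ?thesis by (simp add: D_def algebra_simps)
  qed
  have one: "mat 1 \<in> SL2" by (simp add: SL2_def)
  have "D (mat 1) (x ** y) = D (mat 1) x + D (mat 1) y" if "det x = 1" "det y = 1" for x y
    using D_cocycle[OF one, of x "x ** y"] D_inv[of x "mat 1" y] that one
    by (simp add: SL2_def det_mul)
  then have D_one: "D (mat 1) g = 0" if "det g = 1" for g
    using SL2_hom_eq_0 that by blast
  have "D g1 g2 = D (sl2_inv g1 ** g1) (sl2_inv g1 ** g2)"
    using D_inv SL2_sl2_inv assms(2,3) by simp
  also have "\<dots> = 0"
    using assms(2,3) D_one SL2_sl2_inv[OF assms(2)]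
    by (simp add: SL2_def sl2_inv_left det_mul)
  finally show ?thesis by (simp add: D_def)
qed

theorem mainTheorem15:
  shows "\<exists>\<phi>. phi_prop \<phi> \<and>
           (\<forall>\<psi>. phi_prop \<psi> \<longrightarrow> (\<forall>g1\<in>SL2. \<forall>g2\<in>SL2. \<psi> g1 g2 = \<phi> g1 g2))"
  using phi_prop_phi_std phi_prop_unique by blast

end
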